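(* For any number of buyers $I\ge1$, any $k\ge 1$, $a>0$ and $X>0$, the exponential price mechanism with parameters $(k,a,X)$ guarantees a revenue of $$\sum_{v\in V}p(v)\cdot\min_{0\le n\le I}\left(\frac{a\,v}{k}\sum_{j=n+1}^{I}\frac1j+nX\big((1+1/a)^k-1\big)-(I-n)X\right).$$ Consequently it (for suitable parameters) guarantees any revenue below $\Pi_I^*$, the supremum of this expression over $k\ge1$, $a>0$, $X$.
   Context: Setting: a single good is sold to buyers $\mathcal I=\{1,\ldots,I\}$ who have a common value $v\in V=\{0,\nu,2\nu,\ldots,1\}$ with known prior $p\in\Delta(V)$, and quasi-linear utility. A mechanism consists of finite message sets $M_i$ (with $M=\prod_i M_i$), allocation rules $q_i:M\to[0,1]$ with $\sum_i q_i(m)\le 1$, and payment rules $P_i:M\to\mathbb R$; each $M_i$ contains an opt-out message $0$ with $q_i(0,m_{-i})=P_i(0,m_{-i})=0$ for all $m_{-i}$. Buyer $i$'s utility is $U_i(v,m)=v\,q_i(m)-P_i(m)$. A Bayes correlated equilibrium (BCE) of the mechanism is a $\mu\in\Delta(V\times M)$ with $\sum_m\mu(v,m)=p(v)$ for all $v$ and $\sum_{(v,m_{-i})}\mu(v,m)\big(U_i(v,(m_i,m_{-i}))-U_i(v,(m_i',m_{-i}))\big)\ge 0$ for all $i$ and all $m_i,m_i'\in M_i$. A mechanism guarantees revenue $R$ if every BCE $\mu$ satisfies $\sum_{(v,m)}\sum_i\mu(v,m)P_i(m)\ge R$. Exponential price mechanism (parameters $k\ge1$, $a>0$, $X>0$):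 $M_i=\{0,1,\ldots,k\}$ for all $i$; it is symmetric, i.e. $q_i(m)=q(m_i,m_{-i})$ and $P_i(m)=P(m_i,m_{-i})$ where $q,P$ are invariant under permutations of the entries of $m_{-i}$. The allocation is defined by $q(0,m_{-1})=0$ and, for $0\le m_1\le k-1$, $q(m_1+1,m_{-1})-q(m_1,m_{-1})=\frac1k\cdot\frac{1}{|\mathrm{rank}(m_1,m_{-1})|}\sum_{j\in\mathrm{rank}(m_1,m_{-1})}\frac1j$, where $\mathrm{rank}(m_1,m_{-1})\subseteq\{1,\ldots,I\}$ is the set of positions (counting from the top, ties occupying consecutive positions) that the value $m_1$ occupies in the list $(m_1,\ldots,m_I)$ sorted in decreasing order (e.g. $\mathrm{rank}(20,10,20,40,30)=\{3,4\}$). The payment is $P(m_1,m_{-1})=X\big((1+1/a)^{m_1}-1\big)$. *)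

theory Defs
  imports Complex_Main "HOL-Library.FuncSet"
begin

text \<open>Buyers are indexed 0,...,I-1; buyer i's message set is
  Ms i (a finite set of naturals containing the opt-out message 0). A message profile
  is an element of the extensional function space over the buyers.
  q i m is buyer i's allocation probability, P i m his payment.\<close>

definition profiles :: "nat \<Rightarrow> (nat \<Rightarrow> nat set) \<Rightarrow> (nat \<Rightarrow> nat) set" where
  "profiles I Ms = PiE {0..<I} Ms"

definition util :: "(nat \<Rightarrow> (nat \<Rightarrow> nat) \<Rightarrow> real) \<Rightarrow> (nat \<Rightarrow> (nat \<Rightarrow> nat) \<Rightarrow> real)
    \<Rightarrow> nat \<Rightarrow> real \<Rightarrow> (nat \<Rightarrow> nat) \<Rightarrow> real" where
  "util q P i v m = v * q i m - P i m"

text \<open>Bayes correlated equilibrium: a probability distribution mu on V x M with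
  marginal p on V satisfying the obedience constraints.\<close>

definition is_BCE :: "nat \<Rightarrow> (nat \<Rightarrow> nat set) \<Rightarrow> (nat \<Rightarrow> (nat \<Rightarrow> nat) \<Rightarrow> real)
    \<Rightarrow> (nat \<Rightarrow> (nat \<Rightarrow> nat) \<Rightarrow> real) \<Rightarrow> real set \<Rightarrow> (real \<Rightarrow> real)
    \<Rightarrow> (real \<Rightarrow> (nat \<Rightarrow> nat) \<Rightarrow> real) \<Rightarrow> bool" where
  "is_BCE I Ms q P V p \<mu> \<longleftrightarrow>
     (\<forall>v\<in>V. \<forall>m\<in>profiles I Ms. 0 \<le> \<mu> v m) \<and>
     (\<forall>v\<in>V. (\<Sum>m\<in>profiles I Ms. \<mu> v m) = p v) \<and>
     (\<forall>i<I. \<forall>mi\<in>Ms i. \<forall>mi'\<in>Ms i.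
        0 \<le> (\<Sum>v\<in>V. \<Sum>m\<in>{m\<in>profiles I Ms. m i = mi}.
               \<mu> v m * (util q P i v m - util q P i v (m(i := mi')))))"

definition revenue :: "nat \<Rightarrow> (nat \<Rightarrow> nat set) \<Rightarrow> (nat \<Rightarrow> (nat \<Rightarrow> nat) \<Rightarrow> real)
    \<Rightarrow> real set \<Rightarrow> (real \<Rightarrow> (nat \<Rightarrow> nat) \<Rightarrow> real) \<Rightarrow> real" where
  "revenue I Ms P V \<mu> = (\<Sum>v\<in>V. \<Sum>m\<in>profiles I Ms. \<mu> v m * (\<Sum>i<I. P i m))"

definition guarantees :: "nat \<Rightarrow> (nat \<Rightarrow> nat set) \<Rightarrow> (nat \<Rightarrow> (nat \<Rightarrow> nat) \<Rightarrow> real)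
    \<Rightarrow> (nat \<Rightarrow> (nat \<Rightarrow> nat) \<Rightarrow> real) \<Rightarrow> real set \<Rightarrow> (real \<Rightarrow> real) \<Rightarrow> real \<Rightarrow> bool" where
  "guarantees I Ms q P V p R \<longleftrightarrow>
     (\<forall>\<mu>. is_BCE I Ms q P V p \<mu> \<longrightarrow> R \<le> revenue I Ms P V \<mu>)"

definition value_grid :: "nat \<Rightarrow> real set" where
  "value_grid N = (\<lambda>j. real j / real N) ` {0..N}"

text \<open>Exponential price mechanism. rank_set I m i t is the set of positions (1-based,
  from the top, ties occupying consecutive positions) that the value t occupies when
  buyer i's message is replaced by t in the profile m.\<close>

definition rank_set :: "nat \<Rightarrow> (nat \<Rightarrow> nat) \<Rightarrow> nat \<Rightarrow> nat \<Rightarrow> nat set" where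
  "rank_set I m i t =
     (let g = card {j\<in>{0..<I}. j \<noteq> i \<and> m j > t};
          e = card {j\<in>{0..<I}. j \<noteq> i \<and> m j = t}
      in {g + 1 .. g + e + 1})"

definition exp_msgs :: "nat \<Rightarrow> nat \<Rightarrow> nat set" where
  "exp_msgs k i = {0..k}"

definition exp_q :: "nat \<Rightarrow> nat \<Rightarrow> nat \<Rightarrow> (nat \<Rightarrow> nat) \<Rightarrow> real" where
  "exp_q I k i m = (\<Sum>t<m i. (1 / real k) * (1 / real (card (rank_set I m i t)))
                          * (\<Sum>j\<in>rank_set I m i t. 1 / real j))"

definition exp_P :: "real \<Rightarrow> real \<Rightarrow> nat \<Rightarrow> (nat \<Rightarrow> nat) \<Rightarrow> real" where
  "exp_P a X i m = X * ((1 + 1 / a) ^ (m i) - 1)"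

definition revenue_bound :: "nat \<Rightarrow> real set \<Rightarrow> (real \<Rightarrow> real) \<Rightarrow> nat \<Rightarrow> real \<Rightarrow> real \<Rightarrow> real" where
  "revenue_bound I V p k a X =
     (\<Sum>v\<in>V. p v * Min ((\<lambda>n. a * v / real k * (\<Sum>j\<in>{n+1..I}. 1 / real j)
                              + real n * X * ((1 + 1 / a) ^ k - 1)
                              - real (I - n) * X) ` {0..I}))"

end

theory Submission
  imports Defs
begin

text \<open>Raising one's message from t to t + 1 in the exponential price mechanism increases the
  allocation by rank_share / k and the payment by (P + X) / a, so obedience against this upward
  deviation says that, in expectation over the profiles where buyer i sends t,
  a v rank_share / k - P - X is nonpositive. Summing these constraints over all buyers and all
  t < k and adding them to the revenue leaves, profile by profile, a quantity that depends only
  on the number n of buyers sending the top message k: they pay X((1 + 1/a)^k - 1) each, the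
  remaining I - n buyers contribute -X each, and their rank shares add up to the harmonic tail
  1/(n+1) + ... + 1/I. Hence the revenue is at least the expectation of the minimum over n.\<close>

lemma sum_greaterThanAtMost_concat:
  fixes f :: "nat \<Rightarrow> 'a::comm_monoid_add"
  assumes "l \<le> m" "m \<le> u"
  shows "sum f {l<..m} + sum f {m<..u} = sum f {l<..u}"
proof -
  have "{l<..m} \<union> {m<..u} = {l<..u}" "{l<..m} \<inter> {m<..u} = {}" using assms by auto
  then show ?thesis by (metis finite_greaterThanAtMost sum.union_disjoint)
qed

lemma sum_if_const_eq_card:
  fixes I :: nat
  shows "(\<Sum>i<I. if Q i then (c::real) else 0) = real (card {i\<in>{..<I}. Q i}) * c"
proof -
  have "(\<Sum>i<I. if Q i then c else 0) = (\<Sum>i\<in>{i\<in>{..<I}. Q i}. c)"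
    using sum.inter_filter[OF finite_lessThan, where P = Q and g = "\<lambda>_. c"] by simp
  then show ?thesis by simp
qed

lemma sum_if_below_eq_sum_levels:
  fixes f :: "(nat \<Rightarrow> nat) \<Rightarrow> real"
  assumes "finite M"
  shows "(\<Sum>m\<in>M. if m i < k then f m else 0) = (\<Sum>t<k. \<Sum>m\<in>{m\<in>M. m i = t}. f m)"
proof -
  have "(\<Sum>m\<in>M. if m i < k then f m else 0) = (\<Sum>m\<in>{m\<in>M. m i < k}. f m)"
    by (simp add: sum.inter_filter[OF assms])
  also have "\<dots> = (\<Sum>t<k. \<Sum>m\<in>{m\<in>{m\<in>M. m i < k}. m i = t}. f m)"
    by (rule sum.group[symmetric]) (use assms in auto)
  also have "\<dots> = (\<Sum>t<k. \<Sum>m\<in>{m\<in>M. m i = t}. f m)"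
    by (intro sum.cong) auto
  finally show ?thesis .
qed

lemma guarantees_mono:
  assumes "guarantees I Ms q P V p R'" "R \<le> R'"
  shows "guarantees I Ms q P V p R"
  using assms unfolding guarantees_def by force

text \<open>k times the increase of buyer i's allocation when he raises his message by one step:
  the buyers tied with him at m i share equally the harmonic weights of the ranks they occupy.\<close>

definition rank_share :: "nat \<Rightarrow> (nat \<Rightarrow> nat) \<Rightarrow> nat \<Rightarrow> real" where
  "rank_share I m i =
     (1 / real (card (rank_set I m i (m i)))) * (\<Sum>j\<in>rank_set I m i (m i). 1 / real j)"

lemma rank_set_fun_upd_self [simp]: "rank_set I (m(i := x)) i t = rank_set I m i t"
proof -
  have "{j\<in>{0..<I}. j \<noteq> i \<and> (m(i := x)) j > t} = {j\<in>{0..<I}. j \<noteq> i \<and> m j > t}"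
       "{j\<in>{0..<I}. j \<noteq> i \<and> (m(i := x)) j = t} = {j\<in>{0..<I}. j \<noteq> i \<and> m j = t}"
    by auto
  then show ?thesis unfolding rank_set_def by simp
qed

lemma exp_q_raise:
  "exp_q I k i (m(i := Suc (m i))) = exp_q I k i m + rank_share I m i / real k"
  unfolding exp_q_def rank_share_def by simp

lemma exp_P_raise:
  assumes "a > 0"
  shows "exp_P a X i (m(i := Suc (m i))) = exp_P a X i m + (exp_P a X i m + X) / a"
  using assms unfolding exp_P_def by (simp add: field_simps)

definition raise_margin :: "nat \<Rightarrow> nat \<Rightarrow> real \<Rightarrow> real \<Rightarrow> real \<Rightarrow> (nat \<Rightarrow> nat) \<Rightarrow> nat \<Rightarrow> real" where
  "raise_margin I k a X v m i = a * v / real k * rank_share I m i - exp_P a X i m - X"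

lemma util_raise:
  assumes "a > 0"
  shows "util (exp_q I k) (exp_P a X) i v (m(i := Suc (m i))) - util (exp_q I k) (exp_P a X) i v m
         = raise_margin I k a X v m i / a"
  using assms unfolding util_def raise_margin_def exp_q_raise exp_P_raise[OF assms]
  by (simp add: field_simps)

lemma sum_rank_share_tie_class:
  fixes m :: "nat \<Rightarrow> nat"
  shows "(\<Sum>i\<in>{i\<in>{..<I}. m i = t}. rank_share I m i) =
         (\<Sum>j\<in>{card {i\<in>{..<I}. Suc t \<le> m i}<..card {i\<in>{..<I}. t \<le> m i}}. 1 / real j)"
proof -
  define G where "G = {i\<in>{..<I}. m i = t}"
  define above where "above = card {i\<in>{..<I}. Suc t \<le> m i}"
  define atleast where "atleast = card {i\<in>{..<I}. t \<le> m i}"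
  have "{i\<in>{..<I}. t \<le> m i} = {i\<in>{..<I}. Suc t \<le> m i} \<union> G"
       "{i\<in>{..<I}. Suc t \<le> m i} \<inter> G = {}"
    unfolding G_def by auto
  then have atleast: "atleast = above + card G"
    unfolding atleast_def above_def by (simp add: card_Un_disjoint G_def)
  show ?thesis
  proof (cases "G = {}")
    case True
    with atleast have "atleast = above" by simp
    moreover have "(\<Sum>i\<in>G. rank_share I m i) = 0" using True by simp
    ultimately show ?thesis unfolding G_def above_def atleast_def by simp
  next
    case False
    have "finite G" unfolding G_def by simp
    with False have "card G > 0" by (simp add: card_gt_0_iff)
    have rank: "rank_set I m i (m i) = {above<..atleast}" if "i \<in> G" for i
    proof -
      have "m i = t" "i < I" using that unfolding G_def by auto
      then have "{j\<in>{0..<I}. j \<noteq> i \<and> m j > m i} = {i\<in>{..<I}. Suc t \<le> m i}"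
                "{j\<in>{0..<I}. j \<noteq> i \<and> m j = m i} = G - {i}"
        unfolding G_def by auto
      then have "rank_set I m i (m i) = {above + 1 .. above + card (G - {i}) + 1}"
        unfolding rank_set_def Let_def above_def by simp
      moreover have "above + card (G - {i}) + 1 = atleast"
        using that \<open>finite G\<close> \<open>card G > 0\<close> atleast by simp
      ultimately show ?thesis by (simp add: atLeastSucAtMost_greaterThanAtMost)
    qed
    have "(\<Sum>i\<in>G. rank_share I m i) = (\<Sum>i\<in>G. (1 / real (card G)) * (\<Sum>j\<in>{above<..atleast}. 1 / real j))"
      unfolding rank_share_def using rank atleast by simp
    also have "\<dots> = (\<Sum>j\<in>{above<..atleast}. 1 / real j)" using \<open>card G > 0\<close> by simp
    finally show ?thesis unfolding G_def above_def atleast_def .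
  qed
qed

lemma sum_rank_share_below:
  fixes m :: "nat \<Rightarrow> nat"
  shows "(\<Sum>i\<in>{i\<in>{..<I}. m i < t}. rank_share I m i) =
         (\<Sum>j\<in>{card {i\<in>{..<I}. t \<le> m i}<..I}. 1 / real j)"
proof (induction t)
  case 0
  then show ?case by simp
next
  case (Suc t)
  have below_Suc: "{i\<in>{..<I}. m i < Suc t} = {i\<in>{..<I}. m i < t} \<union> {i\<in>{..<I}. m i = t}"
    by auto
  have "(\<Sum>i\<in>{i\<in>{..<I}. m i < Suc t}. rank_share I m i)
      = (\<Sum>i\<in>{i\<in>{..<I}. m i < t}. rank_share I m i) + (\<Sum>i\<in>{i\<in>{..<I}. m i = t}. rank_share I m i)"
    unfolding below_Suc by (rule sum.union_disjoint) auto
  also have "\<dots> = (\<Sum>j\<in>{card {i\<in>{..<I}. t \<le> m i}<..I}. 1 / real j)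
      + (\<Sum>j\<in>{card {i\<in>{..<I}. Suc t \<le> m i}<..card {i\<in>{..<I}. t \<le> m i}}. 1 / real j)"
    unfolding Suc sum_rank_share_tie_class ..
  also have "\<dots> = (\<Sum>j\<in>{card {i\<in>{..<I}. Suc t \<le> m i}<..I}. 1 / real j)"
  proof -
    have "card {i\<in>{..<I}. Suc t \<le> m i} \<le> card {i\<in>{..<I}. t \<le> m i}"
      by (rule card_mono) auto
    moreover have "card {i\<in>{..<I}. t \<le> m i} \<le> card {..<I}"
      by (rule card_mono) auto
    ultimately show ?thesis
      by (subst add.commute) (intro sum_greaterThanAtMost_concat; simp)
  qed
  finally show ?case .
qed

lemma BCE_raise_margin_nonpos:
  assumes bce: "is_BCE I (exp_msgs k) (exp_q I k) (exp_P a X) V p \<mu>"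
    and "a > 0" "i < I" "t < k"
  shows "(\<Sum>v\<in>V. \<Sum>m\<in>{m\<in>profiles I (exp_msgs k). m i = t}.
           \<mu> v m * raise_margin I k a X v m i) \<le> 0"
proof -
  let ?U = "util (exp_q I k) (exp_P a X) i"
  have "0 \<le> (\<Sum>v\<in>V. \<Sum>m\<in>{m\<in>profiles I (exp_msgs k). m i = t}.
                \<mu> v m * (?U v m - ?U v (m(i := Suc t))))"
    using bce \<open>i < I\<close> \<open>t < k\<close> unfolding is_BCE_def exp_msgs_def by simp
  also have "\<dots> = (\<Sum>v\<in>V. \<Sum>m\<in>{m\<in>profiles I (exp_msgs k). m i = t}.
                - (\<mu> v m * raise_margin I k a X v m i / a))"
  proof (intro sum.cong refl)
    fix v m assume "m \<in> {m\<in>profiles I (exp_msgs k). m i = t}"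
    then have "?U v m - ?U v (m(i := Suc t)) = - (raise_margin I k a X v m i / a)"
      using util_raise[OF \<open>a > 0\<close>, of I k X i v m] by simp
    then show "\<mu> v m * (?U v m - ?U v (m(i := Suc t))) = - (\<mu> v m * raise_margin I k a X v m i / a)"
      by simp
  qed
  also have "\<dots> = - (\<Sum>v\<in>V. \<Sum>m\<in>{m\<in>profiles I (exp_msgs k). m i = t}.
                \<mu> v m * raise_margin I k a X v m i) / a"
    by (simp add: sum_negf sum_divide_distrib)
  finally show ?thesis using \<open>a > 0\<close> by (auto simp: divide_le_0_iff)
qed

lemma BCE_sum_raise_margins_nonpos:
  assumes bce: "is_BCE I (exp_msgs k) (exp_q I k) (exp_P a X) V p \<mu>" and "a > 0"
  shows "(\<Sum>v\<in>V. \<Sum>m\<in>profiles I (exp_msgs k).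
           \<mu> v m * (\<Sum>i<I. if m i < k then raise_margin I k a X v m i else 0)) \<le> 0"
proof -
  define M where "M = profiles I (exp_msgs k)"
  have "finite M" unfolding M_def profiles_def exp_msgs_def by (simp add: finite_PiE)
  have buyer: "(\<Sum>v\<in>V. \<Sum>m\<in>M. if m i < k then \<mu> v m * raise_margin I k a X v m i else 0) \<le> 0"
    if "i < I" for i
  proof -
    have "(\<Sum>v\<in>V. \<Sum>m\<in>M. if m i < k then \<mu> v m * raise_margin I k a X v m i else 0)
        = (\<Sum>t<k. \<Sum>v\<in>V. \<Sum>m\<in>{m\<in>M. m i = t}. \<mu> v m * raise_margin I k a X v m i)"
      unfolding sum_if_below_eq_sum_levels[OF \<open>finite M\<close>] by (rule sum.swap)
    also have "\<dots> \<le> 0"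
      by (rule sum_nonpos) (use BCE_raise_margin_nonpos[OF bce \<open>a > 0\<close> \<open>i < I\<close>] in \<open>auto simp: M_def\<close>)
    finally show ?thesis .
  qed
  have "(\<Sum>v\<in>V. \<Sum>m\<in>M. \<mu> v m * (\<Sum>i<I. if m i < k then raise_margin I k a X v m i else 0))
      = (\<Sum>i<I. \<Sum>v\<in>V. \<Sum>m\<in>M. if m i < k then \<mu> v m * raise_margin I k a X v m i else 0)"
  proof -
    have "\<mu> v m * (\<Sum>i<I. if m i < k then raise_margin I k a X v m i else 0)
        = (\<Sum>i<I. if m i < k then \<mu> v m * raise_margin I k a X v m i else 0)" for v m
      by (auto simp: sum_distrib_left intro!: sum.cong)
    then have "(\<Sum>v\<in>V. \<Sum>m\<in>M. \<mu> v m * (\<Sum>i<I. if m i < k then raise_margin I k a X v m i else 0))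
        = (\<Sum>v\<in>V. \<Sum>i<I. \<Sum>m\<in>M. if m i < k then \<mu> v m * raise_margin I k a X v m i else 0)"
      by (simp add: sum.swap[of _ M])
    then show ?thesis by (simp only: sum.swap[of _ V])
  qed
  also have "\<dots> \<le> 0" by (rule sum_nonpos) (use buyer in auto)
  finally show ?thesis unfolding M_def .
qed

definition bound_term :: "nat \<Rightarrow> nat \<Rightarrow> real \<Rightarrow> real \<Rightarrow> real \<Rightarrow> nat \<Rightarrow> real" where
  "bound_term I k a X v n =
     a * v / real k * (\<Sum>j\<in>{n+1..I}. 1 / real j) + real n * X * ((1 + 1 / a) ^ k - 1)
     - real (I - n) * X"

lemma revenue_bound_eq_Min_bound_term:
  "revenue_bound I V p k a X = (\<Sum>v\<in>V. p v * Min (bound_term I k a X v ` {0..I}))"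
  unfolding revenue_bound_def bound_term_def ..

lemma exp_payments_plus_raise_margins:
  assumes "\<forall>i<I. m i \<le> k"
  shows "(\<Sum>i<I. exp_P a X i m) + (\<Sum>i<I. if m i < k then raise_margin I k a X v m i else 0)
         = bound_term I k a X v (card {i\<in>{..<I}. m i = k})"
proof -
  define n where "n = card {i\<in>{..<I}. m i = k}"
  have "exp_P a X i m + (if m i < k then raise_margin I k a X v m i else 0)
      = (if m i = k then X * ((1 + 1 / a) ^ k - 1) else 0)
        + a * v / real k * (if m i < k then rank_share I m i else 0) - (if m i < k then X else 0)"
    if "i < I" for i
    using assms that unfolding raise_margin_def exp_P_def by auto
  then have "(\<Sum>i<I. exp_P a X i m) + (\<Sum>i<I. if m i < k then raise_margin I k a X v m i else 0)
      = (\<Sum>i<I. if m i = k then X * ((1 + 1 / a) ^ k - 1) else 0)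
        + a * v / real k * (\<Sum>i<I. if m i < k then rank_share I m i else 0)
        - (\<Sum>i<I. if m i < k then X else 0)"
    by (simp add: sum_distrib_left sum_subtractf[symmetric] sum.distrib[symmetric])
  also have "(\<Sum>i<I. if m i = k then X * ((1 + 1 / a) ^ k - 1) else 0) = real n * (X * ((1 + 1 / a) ^ k - 1))"
    unfolding n_def by (rule sum_if_const_eq_card)
  also have "(\<Sum>i<I. if m i < k then X else 0) = real (I - n) * X"
  proof -
    have "{i\<in>{..<I}. m i < k} = {..<I} - {i\<in>{..<I}. m i = k}"
      using assms by (auto simp: order.order_iff_strict)
    then have "card {i\<in>{..<I}. m i < k} = I - n"
      unfolding n_def by (simp add: card_Diff_subset subset_eq)
    then show ?thesis by (simp add: sum_if_const_eq_card)
  qed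
  also have "(\<Sum>i<I. if m i < k then rank_share I m i else 0) = (\<Sum>j\<in>{n+1..I}. 1 / real j)"
  proof -
    have "{i\<in>{..<I}. k \<le> m i} = {i\<in>{..<I}. m i = k}" using assms by force
    then show ?thesis
      using sum_rank_share_below[of I m k]
      by (simp add: sum.inter_filter[symmetric] n_def atLeastSucAtMost_greaterThanAtMost)
  qed
  finally show ?thesis unfolding bound_term_def n_def by (simp add: algebra_simps)
qed

lemma exp_mechanism_revenue_bound_le_revenue:
  assumes bce: "is_BCE I (exp_msgs k) (exp_q I k) (exp_P a X) V p \<mu>" and "a > 0"
  shows "revenue_bound I V p k a X \<le> revenue I (exp_msgs k) (exp_P a X) V \<mu>"
proof -
  define M where "M = profiles I (exp_msgs k)"
  define n where "n m = card {i\<in>{..<I}. m i = k}" for m :: "nat \<Rightarrow> nat"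
  define margins where
    "margins v m = (\<Sum>i<I. if m i < k then raise_margin I k a X v m i else 0)" for v m
  have n_le: "n m \<le> I" for m
    unfolding n_def using card_mono[of "{..<I}" "{i\<in>{..<I}. m i = k}"] by auto
  have msg_le: "\<forall>i<I. m i \<le> k" if "m \<in> M" for m
    using that unfolding M_def profiles_def exp_msgs_def by (auto simp: PiE_iff)
  have mu_nonneg: "\<mu> v m \<ge> 0" if "v \<in> V" "m \<in> M" for v m
    using bce that unfolding is_BCE_def M_def by auto
  have "revenue_bound I V p k a X = (\<Sum>v\<in>V. \<Sum>m\<in>M. \<mu> v m * Min (bound_term I k a X v ` {0..I}))"
    using bce unfolding revenue_bound_eq_Min_bound_term is_BCE_def M_def
    by (simp add: sum_distrib_right[symmetric])
  also have "\<dots> \<le> (\<Sum>v\<in>V. \<Sum>m\<in>M. \<mu> v m * bound_term I k a X v (n m))"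
    by (intro sum_mono mult_left_mono Min_le) (auto simp: n_le mu_nonneg)
  also have "\<dots> = (\<Sum>v\<in>V. \<Sum>m\<in>M. \<mu> v m * (\<Sum>i<I. exp_P a X i m) + \<mu> v m * margins v m)"
  proof (intro sum.cong refl)
    fix v m assume "m \<in> M"
    then show "\<mu> v m * bound_term I k a X v (n m)
        = \<mu> v m * (\<Sum>i<I. exp_P a X i m) + \<mu> v m * margins v m"
      using exp_payments_plus_raise_margins[OF msg_le[OF \<open>m \<in> M\<close>], of a X v]
      by (simp add: n_def margins_def flip: distrib_left)
  qed
  also have "\<dots> = (\<Sum>v\<in>V. \<Sum>m\<in>M. \<mu> v m * (\<Sum>i<I. exp_P a X i m))
                 + (\<Sum>v\<in>V. \<Sum>m\<in>M. \<mu> v m * margins v m)"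
    by (simp add: sum.distrib)
  also have "\<dots> \<le> (\<Sum>v\<in>V. \<Sum>m\<in>M. \<mu> v m * (\<Sum>i<I. exp_P a X i m))"
    using BCE_sum_raise_margins_nonpos[OF bce \<open>a > 0\<close>] unfolding M_def margins_def by simp
  finally show ?thesis unfolding revenue_def M_def .
qed

lemma exp_mechanism_guarantees_revenue_bound:
  assumes "a > 0"
  shows "guarantees I (exp_msgs k) (exp_q I k) (exp_P a X) V p (revenue_bound I V p k a X)"
  using exp_mechanism_revenue_bound_le_revenue[OF _ assms] unfolding guarantees_def by blast

theorem proposition1:
  fixes I N :: nat and p :: "real \<Rightarrow> real"
  assumes "I \<ge> 1" and "N \<ge> 1"
    and "\<forall>v\<in>value_grid N. 0 \<le> p v"
    and "(\<Sum>v\<in>value_grid N. p v) = 1"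
  shows "(\<forall>(k::nat) (a::real) (X::real). k \<ge> 1 \<longrightarrow> a > 0 \<longrightarrow> X > 0 \<longrightarrow>
            guarantees I (exp_msgs k) (exp_q I k) (exp_P a X) (value_grid N) p
              (revenue_bound I (value_grid N) p k a X))
       \<and> (\<forall>R::real. (\<exists>(k::nat) (a::real) (X::real). k \<ge> 1 \<and> a > 0 \<and> X > 0 \<and>
                        R < revenue_bound I (value_grid N) p k a X) \<longrightarrow>
            (\<exists>(k::nat) (a::real) (X::real). k \<ge> 1 \<and> a > 0 \<and> X > 0 \<and>
               guarantees I (exp_msgs k) (exp_q I k) (exp_P a X) (value_grid N) p R))"
  \<comment> \<open>The guarantee holds for any value set and any marginal.\<close>
  using exp_mechanism_guarantees_revenue_bound guarantees_mono less_imp_le by meson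

end
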